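(* Let $a,r>0$, $\beta\in\mathbb{R}$, $\theta\in(\theta_0,\frac\pi2)$ with $\tan\theta_0\ge\frac{|\beta|}{\sqrt2}$, and $\lambda\in\Sigma_{\theta,r}$. Then for all $\xi'\in\mathbb{R}^{N-1}$ and $j=1,2$, $${\rm Re}(L_j)\ge C(a,\beta,\theta,r)\big(|\lambda|^{1/2}+1+|\xi'|\big).$$
   Context: $\Sigma_{\theta,r}=\{z\in\mathbb{C}\setminus\{0\}:|\arg z|<\pi-\theta,|z|>r\}$. $z_{1,2}(\lambda)=\frac{2\lambda+a(1+\beta^2/2)\pm\sqrt{a^2(1+\beta^2/2)^2-2\lambda^2\beta^2}}{2(1+\beta^2/2)}$ and $L_j(\lambda,\xi')=\sqrt{|\xi'|^2+z_j(\lambda)}$, the square root with positive real part. *)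

theory Defs
  imports "HOL-Analysis.Analysis"
begin

definition Sigma_sec :: "real \<Rightarrow> real \<Rightarrow> complex set" where
  "Sigma_sec \<theta> r = {z. z \<noteq> 0 \<and> \<bar>Arg z\<bar> < pi - \<theta> \<and> cmod z > r}"

text \<open>z_1 (sign +1) and z_2 (sign -1); the inner square root is the principal one (csqrt).
  Since z_1, z_2 only swap under a change of branch, the statement for j = 1,2 is branch-independent.\<close>
definition zroot :: "real \<Rightarrow> real \<Rightarrow> real \<Rightarrow> complex \<Rightarrow> complex" where
  "zroot s a \<beta> l =
     (2 * l + of_real (a * (1 + \<beta>\<^sup>2 / 2))
       + of_real s * csqrt (of_real (a\<^sup>2 * (1 + \<beta>\<^sup>2 / 2)\<^sup>2) - 2 * l\<^sup>2 * of_real (\<beta>\<^sup>2)))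
     / of_real (2 * (1 + \<beta>\<^sup>2 / 2))"

definition z1 :: "real \<Rightarrow> real \<Rightarrow> complex \<Rightarrow> complex" where
  "z1 a \<beta> l = zroot 1 a \<beta> l"

definition z2 :: "real \<Rightarrow> real \<Rightarrow> complex \<Rightarrow> complex" where
  "z2 a \<beta> l = zroot (-1) a \<beta> l"

definition Lfun :: "(real \<Rightarrow> real \<Rightarrow> complex \<Rightarrow> complex) \<Rightarrow> real \<Rightarrow> real \<Rightarrow> complex \<Rightarrow> 'a::euclidean_space \<Rightarrow> complex" where
  "Lfun z a \<beta> l \<xi> = csqrt (of_real ((norm \<xi>)\<^sup>2) + z a \<beta> l)"

end

theory Submission
  imports Defs
begin

text \<open>Put k = \<bar>\<beta>\<bar> / sqrt 2 < T = tan \<theta> and h = a / 2. Each root z = z_j a \<beta> \<lambda> satisfies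
  (z - \<lambda> - h)^2 + k^2 (z - h)^2 = (1 + k^2) h^2, i.e. U = h - z and D = z - \<lambda> - h satisfy
  D^2 + k^2 U^2 = (1 + k^2) h^2 and U + D = -\<lambda>. If -z lay in a thin sector around the positive
  real axis, D would be close either to a real number of modulus below h or to \<plusminus>i k U; in both
  cases -\<lambda> = U + D would lie in the sector of slope T, which \<lambda> \<in> Sigma_sec \<theta> r forbids. Hence
  every z_j stays a fixed angle away from the negative real axis. By Vieta,
  z_1 z_2 = \<lambda> (\<lambda> + a) / (1 + \<beta>^2 / 2), and |\<lambda> + a| \<ge> c |\<lambda>| on the sector, so
  |z_j| \<ge> c (|\<lambda>| + 1). Finally w = |\<xi>'|^2 + z_j also avoids the thin sector around the
  negative axis and |w| \<ge> c (|\<xi>'|^2 + |z_j|), so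
  Re (csqrt w) = sqrt ((|w| + Re w) / 2) \<ge> c sqrt |w| \<ge> C (sqrt |\<lambda>| + 1 + |\<xi>'|).\<close>

definition pos_cone :: "real \<Rightarrow> complex set" where
  "pos_cone m = {w. 0 < Re w \<and> \<bar>Im w\<bar> \<le> m * Re w}"

lemma pos_cone_add_of_real:
  assumes "w \<in> pos_cone m" "0 \<le> m" "0 \<le> s"
  shows "w + of_real s \<in> pos_cone m"
proof -
  have "0 \<le> m * s" using assms(2,3) by simp
  then show ?thesis using assms(1,3) by (auto simp: pos_cone_def distrib_left)
qed

lemma abs_Arg_le_if_pos_cone:
  assumes "0 \<le> \<theta>" "\<theta> < pi / 2" "w \<in> pos_cone (tan \<theta>)"
  shows "\<bar>Arg w\<bar> \<le> \<theta>"
proof -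
  have "\<bar>Im w / Re w\<bar> \<le> tan \<theta>"
    using assms(3) by (simp add: pos_cone_def abs_divide pos_divide_le_eq)
  then have "arctan \<bar>Im w / Re w\<bar> \<le> arctan (tan \<theta>)"
    by (simp add: arctan_le_iff)
  also have "arctan (tan \<theta>) = \<theta>"
    using assms(1,2) by (intro arctan_tan) auto
  finally have "arctan \<bar>Im w / Re w\<bar> \<le> \<theta>" .
  moreover have "\<bar>arctan (Im w / Re w)\<bar> = arctan \<bar>Im w / Re w\<bar>"
    by (simp add: abs_if arctan_minus)
  ultimately show ?thesis
    using assms(3) by (simp add: pos_cone_def arg_conv_arctan)
qed

lemma Sigma_sec_uminus_notin_pos_cone:
  assumes "l \<in> Sigma_sec \<theta> r" "0 \<le> \<theta>" "\<theta> < pi / 2"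
  shows "- l \<notin> pos_cone (tan \<theta>)"
proof
  assume "- l \<in> pos_cone (tan \<theta>)"
  then have "\<bar>Arg (- l)\<bar> \<le> \<theta>" using abs_Arg_le_if_pos_cone assms(2,3) by blast
  moreover have "l \<noteq> 0" "\<bar>Arg l\<bar> < pi - \<theta>" using assms(1) by (auto simp: Sigma_sec_def)
  ultimately show False
    using Arg_minus[of l] by (auto split: if_splits)
qed

lemma norm_of_real_add_ge:
  assumes m: "0 < m" and s: "0 \<le> s" and z: "- z \<notin> pos_cone m"
  shows "m / (2 * (1 + m)) * (s + cmod z) \<le> cmod (of_real s + z)"
proof -
  define W where "W = cmod (of_real s + z)"
  have W_Re: "\<bar>s + Re z\<bar> \<le> W" and W_Im: "\<bar>Im z\<bar> \<le> W"
    using abs_Re_le_cmod[of "of_real s + z"] abs_Im_le_cmod[of "of_real s + z"] by (auto simp: W_def)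
  have z_le: "cmod z \<le> \<bar>Re z\<bar> + \<bar>Im z\<bar>" by (rule cmod_le)
  have "m * (s + cmod z) \<le> 2 * (1 + m) * W"
  proof (cases "0 \<le> Re z")
    case True
    then have "s + cmod z \<le> 2 * W" using s z_le W_Re W_Im by linarith
    then have "m * (s + cmod z) \<le> m * (2 * W)" using m by (intro mult_left_mono) auto
    then show ?thesis using W_Im by (simp add: algebra_simps)
  next
    case False
    then have "m * \<bar>Re z\<bar> < \<bar>Im z\<bar>" using z by (auto simp: pos_cone_def)
    moreover have "m * (s + cmod z) \<le> m * ((s + Re z) + 2 * \<bar>Re z\<bar> + \<bar>Im z\<bar>)"
      using z_le False m by (intro mult_left_mono) auto
    moreover have "m * (s + Re z) \<le> m * W" "m * \<bar>Im z\<bar> \<le> m * W"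
      using W_Re W_Im m by (auto intro: mult_left_mono)
    ultimately show ?thesis using W_Im by (simp add: algebra_simps)
  qed
  then show ?thesis using m by (simp add: W_def field_simps)
qed

lemma norm_add_Re_ge:
  assumes m: "0 < m" and w: "- w \<notin> pos_cone m"
  shows "m\<^sup>2 / (2 * (1 + m\<^sup>2)) * cmod w \<le> cmod w + Re w"
proof -
  have pos: "0 < 1 + m\<^sup>2" by (simp add: add_pos_nonneg)
  show ?thesis
  proof (cases "0 \<le> Re w")
    case True
    have "m\<^sup>2 / (2 * (1 + m\<^sup>2)) \<le> 1" using pos by (simp add: field_simps)
    then have "m\<^sup>2 / (2 * (1 + m\<^sup>2)) * cmod w \<le> cmod w"
      by (intro mult_left_le_one_le) auto
    then show ?thesis using True by linarith
  next
    case False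
    then have "m * \<bar>Re w\<bar> < \<bar>Im w\<bar>" using w by (auto simp: pos_cone_def)
    then have "\<bar>m * Re w\<bar> \<le> \<bar>Im w\<bar>" using m by (simp add: abs_mult)
    then have "(m * Re w)\<^sup>2 \<le> (Im w)\<^sup>2" by (simp only: abs_le_square_iff)
    then have "m\<^sup>2 * (cmod w)\<^sup>2 \<le> (1 + m\<^sup>2) * (Im w)\<^sup>2"
      by (simp add: cmod_power2 power_mult_distrib algebra_simps)
    also have "\<dots> = (1 + m\<^sup>2) * ((cmod w + Re w) * (cmod w - Re w))"
      using cmod_power2[of w] by (simp add: power2_eq_square algebra_simps)
    also have "\<dots> \<le> (1 + m\<^sup>2) * ((cmod w + Re w) * (2 * cmod w))"
      using abs_Re_le_cmod[of w] by (intro mult_left_mono) auto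
    finally have "(m\<^sup>2 * cmod w) * cmod w \<le> (2 * (1 + m\<^sup>2) * (cmod w + Re w)) * cmod w"
      by (simp add: power2_eq_square algebra_simps)
    moreover have "0 < cmod w" using False by auto
    ultimately have "m\<^sup>2 * cmod w \<le> 2 * (1 + m\<^sup>2) * (cmod w + Re w)"
      by (rule mult_right_le_imp_le)
    then show ?thesis using pos by (simp add: field_simps)
  qed
qed

lemma Re_csqrt_of_real_add_ge:
  assumes m: "0 < m" and s: "0 \<le> s" and z: "- z \<notin> pos_cone m"
  shows "sqrt (m ^ 3 / (8 * (1 + m\<^sup>2) * (1 + m)) * (s + cmod z)) \<le> Re (csqrt (of_real s + z))"
proof -
  define w where "w = of_real s + z"
  have "- w \<notin> pos_cone m"
    using pos_cone_add_of_real[of "- w" m s] z m s by (auto simp: w_def)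
  then have angle: "m\<^sup>2 / (2 * (1 + m\<^sup>2)) * cmod w \<le> cmod w + Re w"
    by (rule norm_add_Re_ge[OF m])
  have "m ^ 3 / (8 * (1 + m\<^sup>2) * (1 + m)) * (s + cmod z)
      = m\<^sup>2 / (4 * (1 + m\<^sup>2)) * (m / (2 * (1 + m)) * (s + cmod z))"
    using m by (simp add: field_simps power2_eq_square power3_eq_cube)
  also have "\<dots> \<le> m\<^sup>2 / (4 * (1 + m\<^sup>2)) * cmod w"
    using norm_of_real_add_ge[OF m s z] by (intro mult_left_mono) (auto simp: w_def)
  also have "\<dots> \<le> (cmod w + Re w) / 2"
    using angle by (simp add: field_simps add_pos_nonneg)
  finally show ?thesis by (simp add: w_def)
qed

lemma quadratic_relation_Re_Im:
  fixes U D :: complex and k c :: real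
  assumes "D\<^sup>2 + of_real (k\<^sup>2) * U\<^sup>2 = of_real c"
  shows "(Re D)\<^sup>2 - (Im D)\<^sup>2 = c - k\<^sup>2 * ((Re U)\<^sup>2 - (Im U)\<^sup>2)"
    and "\<bar>Re D\<bar> * \<bar>Im D\<bar> = k\<^sup>2 * \<bar>Re U\<bar> * \<bar>Im U\<bar>"
proof -
  have "Re (D\<^sup>2 + of_real (k\<^sup>2) * U\<^sup>2) = c" "Im (D\<^sup>2 + of_real (k\<^sup>2) * U\<^sup>2) = 0"
    using assms by simp_all
  then have "(Re D)\<^sup>2 - (Im D)\<^sup>2 = c - k\<^sup>2 * ((Re U)\<^sup>2 - (Im U)\<^sup>2)"
    and prod: "Re D * Im D = - (k\<^sup>2 * Re U * Im U)"
    by (simp_all add: Re_power2 Im_power2 algebra_simps)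
  moreover have "\<bar>Re D\<bar> * \<bar>Im D\<bar> = k\<^sup>2 * \<bar>Re U\<bar> * \<bar>Im U\<bar>"
    using arg_cong[OF prod, of abs] by (simp add: abs_mult)
  ultimately show "(Re D)\<^sup>2 - (Im D)\<^sup>2 = c - k\<^sup>2 * ((Re U)\<^sup>2 - (Im U)\<^sup>2)"
    and "\<bar>Re D\<bar> * \<bar>Im D\<bar> = k\<^sup>2 * \<bar>Re U\<bar> * \<bar>Im U\<bar>" by simp_all
qed

lemma Re_power2_le:
  fixes D :: complex
  shows "(Re D)\<^sup>2 \<le> max (Re (D\<^sup>2)) 0 + \<bar>Im (D\<^sup>2)\<bar> / 2"
proof -
  have "(Re D)\<^sup>2 = (cmod (D\<^sup>2) + Re (D\<^sup>2)) / 2"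
    using cmod_power2[of D] by (simp add: norm_power Re_power2)
  moreover have "cmod (D\<^sup>2) \<le> \<bar>Re (D\<^sup>2)\<bar> + \<bar>Im (D\<^sup>2)\<bar>" by (rule cmod_le)
  moreover have "(\<bar>Re (D\<^sup>2)\<bar> + Re (D\<^sup>2)) / 2 = max (Re (D\<^sup>2)) 0" by (simp add: max_def)
  ultimately show ?thesis by argo
qed

lemma Re_add_ge_of_quadratic_relation:
  fixes U D :: complex and k h m :: real
  assumes h: "0 < h"
    and rel: "D\<^sup>2 + of_real (k\<^sup>2) * U\<^sup>2 = of_real ((1 + k\<^sup>2) * h\<^sup>2)"
    and cone: "U - of_real h \<in> pos_cone m" and m: "m \<le> 1 / (4 * (1 + k\<^sup>2))"
  shows "Re U - h \<le> 2 * Re (U + D)"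
proof -
  define x where "x = Re U - h"
  have x: "0 < x" and y: "\<bar>Im U\<bar> \<le> m * x" using cone by (auto simp: pos_cone_def x_def)
  have "0 \<le> m * x" using y by (meson abs_ge_zero order_trans)
  then have m0: "0 \<le> m" using x by (simp add: zero_le_mult_iff)
  have pos: "0 < 1 + k\<^sup>2" by (simp add: add_pos_nonneg)
  have "1 / (4 * (1 + k\<^sup>2)) \<le> 1" using pos by (simp add: field_simps)
  then have "m * x \<le> x" using m m0 x by (intro mult_left_le_one_le) auto
  then have "\<bar>Im U\<bar> \<le> x" using y by linarith
  then have Im_sq: "(Im U)\<^sup>2 \<le> x\<^sup>2" using x by (metis abs_le_square_iff abs_of_pos)
  have "k\<^sup>2 * m \<le> k\<^sup>2 * (1 / (4 * (1 + k\<^sup>2)))" using m by (intro mult_left_mono) auto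
  also have "\<dots> \<le> 1 / 4" using pos by (simp add: field_simps)
  finally have km: "k\<^sup>2 * m \<le> 1 / 4" .
  have hx: "0 \<le> h * x" using h x by simp
  then have "h\<^sup>2 \<le> (h + x)\<^sup>2 - (Im U)\<^sup>2" unfolding power2_sum using Im_sq by linarith
  then have "k\<^sup>2 * h\<^sup>2 \<le> k\<^sup>2 * ((Re U)\<^sup>2 - (Im U)\<^sup>2)"
    by (intro mult_left_mono) (auto simp: x_def)
  then have Re_Q: "Re (D\<^sup>2) \<le> h\<^sup>2"
    using quadratic_relation_Re_Im(1)[OF rel] by (simp add: Re_power2 algebra_simps)
  have "\<bar>Im (D\<^sup>2)\<bar> / 2 = k\<^sup>2 * (h + x) * \<bar>Im U\<bar>"
    using quadratic_relation_Re_Im(2)[OF rel] x h by (simp add: Im_power2 abs_mult x_def algebra_simps)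
  also have "\<dots> \<le> k\<^sup>2 * (h + x) * (m * x)" using y x h by (intro mult_left_mono) auto
  also have "\<dots> = (k\<^sup>2 * m) * ((h + x) * x)" by (simp add: algebra_simps)
  also have "\<dots> \<le> (h + x) * x / 4" using km x h by (simp add: mult_right_mono)
  finally have Im_Q: "\<bar>Im (D\<^sup>2)\<bar> / 2 \<le> (h + x) * x / 4" .
  have "max (Re (D\<^sup>2)) 0 \<le> h\<^sup>2" using Re_Q by simp
  then have "(Re D)\<^sup>2 \<le> h\<^sup>2 + (h + x) * x / 4" using Re_power2_le[of D] Im_Q by linarith
  also have "\<dots> \<le> (h + x / 2)\<^sup>2" using hx by (simp add: power2_eq_square algebra_simps)
  finally have "(Re D)\<^sup>2 \<le> (h + x / 2)\<^sup>2" .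
  then have "\<bar>Re D\<bar> \<le> h + x / 2" using h x by (simp add: power2_le_iff_abs_le)
  then have "- Re D \<le> h + x / 2" by (simp add: abs_le_iff)
  moreover have "Re (U + D) = Re U + Re D" "Re U = h + x" by (simp_all add: x_def)
  ultimately show ?thesis by linarith
qed

lemma Im_add_le_if_Re_large:
  fixes U D :: complex and k c \<eta> m x T :: real
  assumes rel: "D\<^sup>2 + of_real (k\<^sup>2) * U\<^sup>2 = of_real c"
    and \<eta>: "0 < \<eta>" "\<eta> * Re U \<le> \<bar>Re D\<bar>" and U: "0 < Re U"
    and y: "\<bar>Im U\<bar> \<le> m * x" and x: "0 \<le> x" "x \<le> 2 * Re (U + D)"
    and m: "0 \<le> m" "2 * m * (\<eta> + k\<^sup>2) \<le> T * \<eta>"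
  shows "\<bar>Im (U + D)\<bar> \<le> T * Re (U + D)"
proof -
  have "0 < \<eta> * Re U" using \<eta> U by simp
  then have D: "0 < \<bar>Re D\<bar>" using \<eta> by linarith
  have "\<bar>Re D\<bar> * \<bar>Im D\<bar> = k\<^sup>2 * Re U * \<bar>Im U\<bar>"
    using quadratic_relation_Re_Im(2)[OF rel] U by simp
  also have "\<dots> \<le> k\<^sup>2 * (\<bar>Re D\<bar> / \<eta>) * \<bar>Im U\<bar>"
    using \<eta> by (intro mult_right_mono mult_left_mono) (auto simp: field_simps)
  also have "\<dots> = \<bar>Re D\<bar> * (k\<^sup>2 / \<eta> * \<bar>Im U\<bar>)" by simp
  finally have "\<bar>Im D\<bar> \<le> k\<^sup>2 / \<eta> * \<bar>Im U\<bar>" using D by (rule mult_left_le_imp_le)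
  then have "\<bar>Im (U + D)\<bar> \<le> \<bar>Im U\<bar> + k\<^sup>2 / \<eta> * \<bar>Im U\<bar>"
    using abs_triangle_ineq[of "Im U" "Im D"] by simp
  also have "\<dots> = (\<eta> + k\<^sup>2) / \<eta> * \<bar>Im U\<bar>" using \<eta> by (simp add: field_simps)
  also have "\<dots> \<le> (\<eta> + k\<^sup>2) / \<eta> * (m * x)"
    using y \<eta> by (intro mult_left_mono) auto
  also have "\<dots> \<le> (\<eta> + k\<^sup>2) / \<eta> * (m * (2 * Re (U + D)))"
    using x \<eta> m by (intro mult_left_mono) auto
  also have "\<dots> = (2 * m * (\<eta> + k\<^sup>2) / \<eta>) * Re (U + D)" by (simp add: field_simps)
  also have "\<dots> \<le> T * Re (U + D)"
    using m \<eta> x by (intro mult_right_mono) (auto simp: pos_divide_le_eq)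
  finally show ?thesis .
qed

lemma Im_add_le_if_Re_small:
  fixes U D :: complex and k c \<eta> m T :: real
  assumes k: "0 \<le> k" and rel: "D\<^sup>2 + of_real (k\<^sup>2) * U\<^sup>2 = of_real c" and c: "0 \<le> c"
    and \<eta>: "0 \<le> \<eta>" "\<bar>Re D\<bar> \<le> \<eta> * Re U" and U: "0 \<le> Re U" and y: "\<bar>Im U\<bar> \<le> m * Re U"
    and T: "0 \<le> T" "m + \<eta> + k \<le> T * (1 - \<eta>)"
  shows "\<bar>Im (U + D)\<bar> \<le> T * Re (U + D)"
proof -
  have "0 \<le> \<eta> * Re U" using \<eta> U by simp
  then have "(Re D)\<^sup>2 \<le> (\<eta> * Re U)\<^sup>2" using \<eta> by (simp add: power2_le_iff_abs_le)
  moreover have "(Im D)\<^sup>2 = (Re D)\<^sup>2 - c + k\<^sup>2 * (Re U)\<^sup>2 - k\<^sup>2 * (Im U)\<^sup>2"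
    using quadratic_relation_Re_Im(1)[OF rel] by (simp add: algebra_simps)
  moreover have "0 \<le> k\<^sup>2 * (Im U)\<^sup>2" "0 \<le> 2 * \<eta> * k * (Re U)\<^sup>2" using k \<eta> by simp_all
  moreover have "((\<eta> + k) * Re U)\<^sup>2 = (\<eta> * Re U)\<^sup>2 + k\<^sup>2 * (Re U)\<^sup>2 + 2 * \<eta> * k * (Re U)\<^sup>2"
    by (simp add: power2_eq_square algebra_simps)
  ultimately have "(Im D)\<^sup>2 \<le> ((\<eta> + k) * Re U)\<^sup>2" using c by linarith
  then have "\<bar>Im D\<bar> \<le> (\<eta> + k) * Re U" using k \<eta> U by (simp add: power2_le_iff_abs_le)
  then have "\<bar>Im (U + D)\<bar> \<le> (m + \<eta> + k) * Re U"
    using y abs_triangle_ineq[of "Im U" "Im D"] by (simp add: algebra_simps)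
  also have "\<dots> \<le> T * (1 - \<eta>) * Re U" using T U by (intro mult_right_mono) auto
  also have "\<dots> \<le> T * Re (U + D)"
  proof -
    have "(1 - \<eta>) * Re U \<le> Re (U + D)" using \<eta> by (simp add: algebra_simps)
    then show ?thesis using T by (simp add: mult.assoc mult_left_mono)
  qed
  finally show ?thesis .
qed

lemma quadratic_relation_cone_parameters:
  fixes k T :: real
  assumes k: "0 \<le> k" and kT: "k < T"
  obtains \<eta> m where "0 < \<eta>" "0 < m" "m \<le> 1 / (4 * (1 + k\<^sup>2))"
    "m + \<eta> + k \<le> T * (1 - \<eta>)" "2 * m * (\<eta> + k\<^sup>2) \<le> T * \<eta>"
proof -
  define \<eta> where "\<eta> = (T - k) / (4 * (1 + T))"
  define m where "m = min (1 / (4 * (1 + k\<^sup>2))) (min ((T - k) / 4) (T * \<eta> / (2 * (\<eta> + k\<^sup>2))))"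
  have T: "0 < T" using k kT by linarith
  have \<eta>: "0 < \<eta>" using kT T by (simp add: \<eta>_def)
  have \<eta>_eq: "4 * \<eta> + 4 * (T * \<eta>) = T - k"
    using T by (simp add: \<eta>_def divide_simps) (simp add: algebra_simps)
  have "m \<le> (T - k) / 4" unfolding m_def by (meson min.cobounded1 min.cobounded2 order_trans)
  then have "4 * m \<le> T - k" by simp
  then have "m + \<eta> + k \<le> T * (1 - \<eta>)"
    using \<eta>_eq kT unfolding right_diff_distrib mult_1_right by linarith
  moreover have "m \<le> T * \<eta> / (2 * (\<eta> + k\<^sup>2))" unfolding m_def by (meson min.cobounded2 order_trans)
  then have "2 * m * (\<eta> + k\<^sup>2) \<le> T * \<eta>"
    using \<eta> by (simp add: pos_le_divide_eq add_pos_nonneg) (simp add: algebra_simps)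
  moreover have "0 < m" using kT T \<eta> by (simp add: m_def add_pos_nonneg)
  moreover have "m \<le> 1 / (4 * (1 + k\<^sup>2))" by (simp add: m_def)
  ultimately show ?thesis using that \<eta> by blast
qed

lemma quadratic_relation_maps_pos_cone:
  fixes k T :: real
  assumes k: "0 \<le> k" and kT: "k < T"
  obtains m where "0 < m"
    and "\<And>h U D. 0 < h \<Longrightarrow> D\<^sup>2 + of_real (k\<^sup>2) * U\<^sup>2 = of_real ((1 + k\<^sup>2) * h\<^sup>2)
           \<Longrightarrow> U - of_real h \<in> pos_cone m \<Longrightarrow> U + D \<in> pos_cone T"
proof -
  obtain \<eta> m where \<eta>: "0 < \<eta>" and m: "0 < m" "m \<le> 1 / (4 * (1 + k\<^sup>2))"
    "m + \<eta> + k \<le> T * (1 - \<eta>)" "2 * m * (\<eta> + k\<^sup>2) \<le> T * \<eta>"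
    using quadratic_relation_cone_parameters[OF k kT] by blast
  show ?thesis
  proof (rule that[OF m(1)])
    fix h U D
    assume h: "0 < h" and rel: "D\<^sup>2 + of_real (k\<^sup>2) * U\<^sup>2 = of_real ((1 + k\<^sup>2) * h\<^sup>2)"
      and cone: "U - of_real h \<in> pos_cone m"
    have x: "0 < Re U - h" and y: "\<bar>Im U\<bar> \<le> m * (Re U - h)" using cone by (auto simp: pos_cone_def)
    have Re: "Re U - h \<le> 2 * Re (U + D)"
      by (rule Re_add_ge_of_quadratic_relation[OF h rel cone m(2)])
    have "\<bar>Im (U + D)\<bar> \<le> T * Re (U + D)"
    proof (cases "\<eta> * Re U \<le> \<bar>Re D\<bar>")
      case True
      show ?thesis
        by (rule Im_add_le_if_Re_large[OF rel \<eta> True _ y _ Re _ m(4)]) (use x h m in auto)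
    next
      case False
      have "m * (Re U - h) \<le> m * Re U" using m h by (simp add: algebra_simps)
      then have "\<bar>Im U\<bar> \<le> m * Re U" using y by linarith
      moreover have "0 \<le> T" using k kT by linarith
      ultimately show ?thesis
        using False x h \<eta> m(3) by (intro Im_add_le_if_Re_small[OF k rel]) auto
    qed
    then show "U + D \<in> pos_cone T" using x Re by (simp add: pos_cone_def)
  qed
qed

lemma z1_z2_vieta:
  fixes a \<beta> :: real and l :: complex
  defines "b \<equiv> 1 + \<beta>\<^sup>2 / 2"
  shows "of_real b * (z1 a \<beta> l + z2 a \<beta> l) = 2 * l + of_real (a * b)"
    and "of_real b * (z1 a \<beta> l * z2 a \<beta> l) = l * (l + of_real a)"
proof -
  define S where "S = csqrt (of_real (a\<^sup>2 * b\<^sup>2) - 2 * l\<^sup>2 * of_real (\<beta>\<^sup>2))"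
  have "0 < b" unfolding b_def by (simp add: add_pos_nonneg)
  then have b: "(of_real b :: complex) \<noteq> 0" by simp
  have z1: "z1 a \<beta> l = (2 * l + of_real (a * b) + S) / of_real (2 * b)"
    and z2: "z2 a \<beta> l = (2 * l + of_real (a * b) - S) / of_real (2 * b)"
    by (simp_all add: z1_def z2_def zroot_def S_def b_def)
  show "of_real b * (z1 a \<beta> l + z2 a \<beta> l) = 2 * l + of_real (a * b)"
    using b by (simp add: z1 z2 field_simps)
  have S: "S\<^sup>2 = of_real (a\<^sup>2 * b\<^sup>2) - 2 * l\<^sup>2 * of_real (2 * b - 2)"
    by (simp add: S_def b_def)
  have "z1 a \<beta> l * z2 a \<beta> l = ((2 * l + of_real (a * b))\<^sup>2 - S\<^sup>2) / of_real (4 * b\<^sup>2)"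
    unfolding z1 z2 by (simp add: power2_eq_square algebra_simps)
  also have "\<dots> = l * (l + of_real a) / of_real b"
    unfolding S using b by (simp add: field_simps power2_eq_square)
  finally show "of_real b * (z1 a \<beta> l * z2 a \<beta> l) = l * (l + of_real a)"
    using b by simp
qed

lemma z_quadratic_relation:
  assumes "z \<in> {z1, z2}"
  shows "(z a \<beta> l - l - of_real (a / 2))\<^sup>2 + of_real (\<beta>\<^sup>2 / 2) * (of_real (a / 2) - z a \<beta> l)\<^sup>2
           = of_real ((1 + \<beta>\<^sup>2 / 2) * (a / 2)\<^sup>2)"
proof -
  define b where "b = 1 + \<beta>\<^sup>2 / 2"
  define w where "w = z a \<beta> l"
  have "of_real b * w\<^sup>2 - of_real b * (z1 a \<beta> l + z2 a \<beta> l) * w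
      + of_real b * (z1 a \<beta> l * z2 a \<beta> l) = of_real b * ((w - z1 a \<beta> l) * (w - z2 a \<beta> l))"
    by (simp add: power2_eq_square algebra_simps)
  also have "\<dots> = 0" using assms by (auto simp: w_def)
  finally have "of_real b * w\<^sup>2 - of_real b * (z1 a \<beta> l + z2 a \<beta> l) * w
      + of_real b * (z1 a \<beta> l * z2 a \<beta> l) = 0" .
  then have "of_real b * w\<^sup>2 - (2 * l + of_real (a * b)) * w + l * (l + of_real a) = 0"
    unfolding b_def z1_z2_vieta .
  moreover have "(w - l - of_real (a / 2))\<^sup>2 + of_real (\<beta>\<^sup>2 / 2) * (of_real (a / 2) - w)\<^sup>2
      - of_real ((1 + \<beta>\<^sup>2 / 2) * (a / 2)\<^sup>2)
      = of_real b * w\<^sup>2 - (2 * l + of_real (a * b)) * w + l * (l + of_real a)"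
    by (simp add: b_def field_simps power2_eq_square)
  ultimately show ?thesis by (simp add: w_def)
qed

lemma norm_csqrt_diff_le: "cmod (csqrt (u - v)) \<le> sqrt (cmod u) + sqrt (cmod v)"
proof -
  have "cmod (csqrt (u - v)) \<le> sqrt (cmod u + cmod v)"
    using norm_triangle_ineq4[of u v] by (simp add: real_sqrt_le_mono)
  also have "\<dots> \<le> sqrt (cmod u) + sqrt (cmod v)" by (rule sqrt_add_le_add_sqrt) auto
  finally show ?thesis .
qed

lemma norm_z_le:
  assumes "z \<in> {z1, z2}" "0 \<le> a"
  shows "cmod (z a \<beta> l) \<le> (1 + \<bar>\<beta>\<bar> + a) * (cmod l + 1)"
proof -
  define b where "b = 1 + \<beta>\<^sup>2 / 2"
  define S where "S = csqrt (of_real (a\<^sup>2 * b\<^sup>2) - 2 * l\<^sup>2 * of_real (\<beta>\<^sup>2))"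
  have b: "1 \<le> b" by (simp add: b_def)
  obtain s :: real where s: "s = 1 \<or> s = -1" and z: "z a \<beta> l = zroot s a \<beta> l"
    using assms(1) unfolding z1_def z2_def by auto
  have S: "cmod S \<le> a * b + sqrt 2 * \<bar>\<beta>\<bar> * cmod l"
    using norm_csqrt_diff_le[of "of_real (a\<^sup>2 * b\<^sup>2)" "2 * l\<^sup>2 * of_real (\<beta>\<^sup>2)"] assms(2) b
    by (simp add: S_def norm_mult norm_power real_sqrt_mult ac_simps)
  have "sqrt 2 \<le> 2" by (rule real_le_lsqrt) auto
  then have "sqrt 2 * \<bar>\<beta>\<bar> \<le> 2 * \<bar>\<beta>\<bar>" by (intro mult_right_mono) auto
  moreover have "2 * (1 + \<bar>\<beta>\<bar>) \<le> 2 * b * (1 + \<bar>\<beta>\<bar>)" using b by (intro mult_right_mono) auto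
  moreover have "2 * (1 + \<bar>\<beta>\<bar>) = 2 + 2 * \<bar>\<beta>\<bar>" by simp
  ultimately have "2 + sqrt 2 * \<bar>\<beta>\<bar> \<le> 2 * b * (1 + \<bar>\<beta>\<bar>)" by linarith
  then have \<beta>: "(2 + sqrt 2 * \<bar>\<beta>\<bar>) * cmod l \<le> 2 * b * (1 + \<bar>\<beta>\<bar>) * cmod l"
    by (intro mult_right_mono) auto
  have "z a \<beta> l = (2 * l + of_real (a * b) + of_real s * S) / of_real (2 * b)"
    by (simp add: z zroot_def S_def b_def)
  then have "2 * b * cmod (z a \<beta> l) = cmod (2 * l + of_real (a * b) + of_real s * S)"
    using b by (simp add: norm_divide norm_mult)
  also have "\<dots> \<le> cmod (2 * l) + cmod (of_real (a * b) :: complex) + cmod (of_real s * S)"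
    by (meson norm_triangle_ineq order_trans add_right_mono)
  also have "\<dots> = 2 * cmod l + a * b + cmod S" using s assms(2) b by (auto simp: norm_mult)
  also have "\<dots> \<le> 2 * b * ((1 + \<bar>\<beta>\<bar>) * cmod l + a)" using S \<beta> by (simp add: algebra_simps)
  finally have "cmod (z a \<beta> l) \<le> (1 + \<bar>\<beta>\<bar>) * cmod l + a" using b by simp
  moreover have "0 \<le> a * cmod l" using assms(2) by simp
  ultimately show ?thesis by (simp add: algebra_simps)
qed

lemma norm_z_mult_norm_other_root:
  assumes "z \<in> {z1, z2}"
  obtains z' where "z' \<in> {z1, z2}"
    and "(1 + \<beta>\<^sup>2 / 2) * (cmod (z a \<beta> l) * cmod (z' a \<beta> l)) = cmod l * cmod (l + of_real a)"
proof -
  have "0 \<le> 1 + \<beta>\<^sup>2 / 2" by (simp add: add_nonneg_nonneg)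
  then have "(1 + \<beta>\<^sup>2 / 2) * (cmod (z1 a \<beta> l) * cmod (z2 a \<beta> l)) = cmod l * cmod (l + of_real a)"
    using arg_cong[OF z1_z2_vieta(2)[of \<beta> a l], of cmod] unfolding norm_mult norm_of_real by simp
  then show ?thesis using assms that[of z2] that[of z1] by (auto simp: mult.commute)
qed

lemma norm_add_of_real_ge_if_Sigma_sec:
  assumes "l \<in> Sigma_sec \<theta> r" "0 < \<theta>" "\<theta> < pi / 2" "0 \<le> a"
  shows "tan \<theta> / (2 * (1 + tan \<theta>)) * cmod l \<le> cmod (l + of_real a)"
proof -
  have T: "0 < tan \<theta>" using assms(2,3) by (simp add: tan_gt_zero)
  have "tan \<theta> / (2 * (1 + tan \<theta>)) * cmod l \<le> tan \<theta> / (2 * (1 + tan \<theta>)) * (a + cmod l)"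
    using T assms(4) by (intro mult_left_mono) auto
  also have "\<dots> \<le> cmod (of_real a + l)"
    using norm_of_real_add_ge[OF T assms(4)]
      Sigma_sec_uminus_notin_pos_cone[OF assms(1) less_imp_le[OF assms(2)] assms(3)] by simp
  finally show ?thesis by (simp add: add.commute)
qed

lemma norm_z_ge:
  assumes "0 < a" "0 < r" "0 < \<theta>" "\<theta> < pi / 2"
  obtains c where "0 < c"
    and "\<And>l z. l \<in> Sigma_sec \<theta> r \<Longrightarrow> z \<in> {z1, z2} \<Longrightarrow> c * (cmod l + 1) \<le> cmod (z a \<beta> l)"
proof -
  define K where "K = tan \<theta> / (2 * (1 + tan \<theta>))"
  define b where "b = 1 + \<beta>\<^sup>2 / 2"
  define C where "C = 1 + \<bar>\<beta>\<bar> + a"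
  define \<rho> where "\<rho> = r / (r + 1)"
  have "0 < tan \<theta>" using assms(3,4) by (simp add: tan_gt_zero)
  then have K: "0 < K" by (simp add: K_def)
  have b: "1 \<le> b" by (simp add: b_def)
  have C: "0 < C" using assms(1) by (simp add: C_def)
  have bC: "0 < b * C" using b C by simp
  have \<rho>: "0 < \<rho>" using assms(2) by (simp add: \<rho>_def)
  show ?thesis
  proof (rule that)
    show "0 < K * \<rho>\<^sup>2 / (b * C)" using K bC \<rho> by simp
  next
    fix l z assume l: "l \<in> Sigma_sec \<theta> r" and z: "z \<in> {z1, z2}"
    define n where "n = cmod l"
    have n: "r < n" using l by (simp add: Sigma_sec_def n_def)
    have n_ge: "\<rho> * (n + 1) \<le> n" using n assms(2) by (simp add: \<rho>_def field_simps)
    obtain z' where z': "z' \<in> {z1, z2}"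
      and prod: "b * (cmod (z a \<beta> l) * cmod (z' a \<beta> l)) = n * cmod (l + of_real a)"
      using norm_z_mult_norm_other_root[OF z] unfolding b_def n_def by blast
    have "K * (\<rho> * (n + 1))\<^sup>2 \<le> K * n\<^sup>2"
      using n_ge \<rho> K n assms(2) by (intro mult_left_mono power_mono) auto
    also have "\<dots> \<le> n * cmod (l + of_real a)"
    proof -
      have "K * n \<le> cmod (l + of_real a)"
        using norm_add_of_real_ge_if_Sigma_sec[OF l assms(3,4), of a] assms(1) by (simp add: K_def n_def)
      then have "n * (K * n) \<le> n * cmod (l + of_real a)" using n assms(2) by (intro mult_left_mono) auto
      then show ?thesis by (simp add: power2_eq_square algebra_simps)
    qed
    also have "\<dots> \<le> b * (cmod (z a \<beta> l) * (C * (n + 1)))"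
      unfolding prod[symmetric] using norm_z_le[OF z', of a \<beta> l] assms(1) b
      by (simp add: C_def n_def mult_left_mono)
    finally have "(K * \<rho>\<^sup>2 / (b * C) * (n + 1)) * (b * C * (n + 1)) \<le> cmod (z a \<beta> l) * (b * C * (n + 1))"
      using b C by (simp add: power_mult_distrib power2_eq_square ac_simps)
    then have "K * \<rho>\<^sup>2 / (b * C) * (n + 1) \<le> cmod (z a \<beta> l)"
      by (rule mult_right_le_imp_le) (use bC n assms(2) in simp)
    then show "K * \<rho>\<^sup>2 / (b * C) * (cmod l + 1) \<le> cmod (z a \<beta> l)" by (simp add: n_def)
  qed
qed

lemma z_uminus_notin_pos_cone:
  assumes "0 < a" "0 \<le> \<theta>" "\<theta> < pi / 2" "\<bar>\<beta>\<bar> / sqrt 2 < tan \<theta>"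
  obtains m where "0 < m" "\<And>l z. l \<in> Sigma_sec \<theta> r \<Longrightarrow> z \<in> {z1, z2} \<Longrightarrow> - z a \<beta> l \<notin> pos_cone m"
proof -
  define k where "k = \<bar>\<beta>\<bar> / sqrt 2"
  have k: "0 \<le> k" "k\<^sup>2 = \<beta>\<^sup>2 / 2" by (simp_all add: k_def power_divide)
  obtain m where m: "0 < m" and maps: "\<And>h U D. 0 < h
      \<Longrightarrow> D\<^sup>2 + of_real (k\<^sup>2) * U\<^sup>2 = of_real ((1 + k\<^sup>2) * h\<^sup>2)
      \<Longrightarrow> U - of_real h \<in> pos_cone m \<Longrightarrow> U + D \<in> pos_cone (tan \<theta>)"
    using quadratic_relation_maps_pos_cone[OF k(1)] assms(4) unfolding k_def by blast
  show ?thesis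
  proof (rule that[OF m])
    fix l z assume l: "l \<in> Sigma_sec \<theta> r" and z: "z \<in> {z1, z2}"
    show "- z a \<beta> l \<notin> pos_cone m"
    proof
      assume cone: "- z a \<beta> l \<in> pos_cone m"
      have "(of_real (a / 2) - z a \<beta> l) + (z a \<beta> l - l - of_real (a / 2)) \<in> pos_cone (tan \<theta>)"
      proof (rule maps[unfolded k(2)])
        show "0 < a / 2" using assms(1) by simp
        show "of_real (a / 2) - z a \<beta> l - of_real (a / 2) \<in> pos_cone m" using cone by simp
      qed (rule z_quadratic_relation[OF z])
      then show False using Sigma_sec_uminus_notin_pos_cone[OF l assms(2,3)] by simp
    qed
  qed
qed

lemma add3_le_sqrt3_mult_sqrt_sum_squares:
  fixes x y z :: real
  shows "x + y + z \<le> sqrt 3 * sqrt (x\<^sup>2 + y\<^sup>2 + z\<^sup>2)"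
proof -
  have "0 \<le> (x - y)\<^sup>2 + (y - z)\<^sup>2 + (x - z)\<^sup>2" by simp
  then have "(x + y + z)\<^sup>2 \<le> 3 * (x\<^sup>2 + y\<^sup>2 + z\<^sup>2)"
    by (simp add: power2_eq_square algebra_simps)
  then have "x + y + z \<le> sqrt (3 * (x\<^sup>2 + y\<^sup>2 + z\<^sup>2))" by (rule real_le_rsqrt)
  then show ?thesis by (metis real_sqrt_mult)
qed

lemma Re_Lfun_ge:
  fixes \<xi> :: "'n::euclidean_space"
  assumes m: "0 < m" and c: "0 < c"
    and cone: "- z a \<beta> l \<notin> pos_cone m" and norm_z: "c * (cmod l + 1) \<le> cmod (z a \<beta> l)"
  shows "sqrt (m ^ 3 / (8 * (1 + m\<^sup>2) * (1 + m)) * min 1 c / 3) * (sqrt (cmod l) + 1 + norm \<xi>)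
           \<le> Re (Lfun z a \<beta> l \<xi>)"
proof -
  define M where "M = m ^ 3 / (8 * (1 + m\<^sup>2) * (1 + m))"
  have M: "0 < M" using m by (simp add: M_def add_pos_nonneg)
  have "min 1 c * (cmod l + 1) \<le> c * (cmod l + 1)" by (intro mult_right_mono) auto
  then have "min 1 c * (cmod l + 1) \<le> cmod (z a \<beta> l)" using norm_z by linarith
  moreover have "min 1 c * (norm \<xi>)\<^sup>2 \<le> (norm \<xi>)\<^sup>2"
    using c by (intro mult_left_le_one_le) auto
  ultimately have "min 1 c * (cmod l + 1 + (norm \<xi>)\<^sup>2) \<le> (norm \<xi>)\<^sup>2 + cmod (z a \<beta> l)"
    by (simp add: algebra_simps)
  then have bound: "M * min 1 c * (cmod l + 1 + (norm \<xi>)\<^sup>2) \<le> M * ((norm \<xi>)\<^sup>2 + cmod (z a \<beta> l))"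
    using M by (simp add: mult.assoc mult_left_mono)
  have "sqrt (M * min 1 c / 3) * (sqrt (cmod l) + 1 + norm \<xi>)
      \<le> sqrt (M * min 1 c / 3) * (sqrt 3 * sqrt (cmod l + 1 + (norm \<xi>)\<^sup>2))"
    using add3_le_sqrt3_mult_sqrt_sum_squares[of "sqrt (cmod l)" 1 "norm \<xi>"] M c
    by (intro mult_left_mono) auto
  also have "\<dots> = sqrt (M * min 1 c * (cmod l + 1 + (norm \<xi>)\<^sup>2))"
    by (simp add: real_sqrt_mult[symmetric])
  also have "\<dots> \<le> sqrt (M * ((norm \<xi>)\<^sup>2 + cmod (z a \<beta> l)))"
    using bound by simp
  also have "\<dots> \<le> Re (Lfun z a \<beta> l \<xi>)"
    using Re_csqrt_of_real_add_ge[OF m _ cone, of "(norm \<xi>)\<^sup>2"] by (simp add: Lfun_def M_def)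
  finally show ?thesis by (simp add: M_def)
qed

theorem lemma3p13:
  fixes a r \<beta> \<theta>0 \<theta> :: real
  assumes "a > 0" and "r > 0"
    and "0 \<le> \<theta>0" and "tan \<theta>0 \<ge> \<bar>\<beta>\<bar> / sqrt 2"
    and "\<theta>0 < \<theta>" and "\<theta> < pi / 2"
  shows "\<exists>C>0. \<forall>l\<in>Sigma_sec \<theta> r. \<forall>(\<xi>::'n::euclidean_space). \<forall>z\<in>{z1, z2}.
           Re (Lfun z a \<beta> l \<xi>) \<ge> C * (sqrt (cmod l) + 1 + norm \<xi>)"
proof -
  have \<theta>: "0 < \<theta>" "\<theta> < pi / 2" using assms(3,5,6) by linarith+
  have "tan \<theta>0 < tan \<theta>" using assms(3,5,6) pi_gt_zero by (intro tan_monotone) linarith+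
  then have \<beta>: "\<bar>\<beta>\<bar> / sqrt 2 < tan \<theta>" using assms(4) by linarith
  obtain m where m: "0 < m"
    and notin: "\<And>l z. l \<in> Sigma_sec \<theta> r \<Longrightarrow> z \<in> {z1, z2} \<Longrightarrow> - z a \<beta> l \<notin> pos_cone m"
    using z_uminus_notin_pos_cone[OF assms(1) less_imp_le[OF \<theta>(1)] \<theta>(2) \<beta>] by blast
  obtain c where c: "0 < c"
    and norm_z: "\<And>l z. l \<in> Sigma_sec \<theta> r \<Longrightarrow> z \<in> {z1, z2} \<Longrightarrow> c * (cmod l + 1) \<le> cmod (z a \<beta> l)"
    using norm_z_ge[OF assms(1,2) \<theta>] by blast
  show ?thesis
  proof (intro exI[of _ "sqrt (m ^ 3 / (8 * (1 + m\<^sup>2) * (1 + m)) * min 1 c / 3)"] conjI ballI allI)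
    show "0 < sqrt (m ^ 3 / (8 * (1 + m\<^sup>2) * (1 + m)) * min 1 c / 3)"
      using m c by (simp add: add_pos_nonneg)
  next
    fix l and \<xi> :: 'n and z assume l: "l \<in> Sigma_sec \<theta> r" and z: "z \<in> {z1, z2}"
    show "sqrt (m ^ 3 / (8 * (1 + m\<^sup>2) * (1 + m)) * min 1 c / 3) * (sqrt (cmod l) + 1 + norm \<xi>)
        \<le> Re (Lfun z a \<beta> l \<xi>)"
      by (rule Re_Lfun_ge) (use m c notin[OF l z] norm_z[OF l z] in auto)
  qed
qed

end
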